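(* Let $f:[0,1]\to\mathbb{R}$ be bounded and let $0<a<b<1$. Assume that $f(t)=c$ for all $t\in(a,b)$, for some real constant $c$. Then for every $n\in\mathbb{N}$ and every $x\in(a,b)$, \[ |B_nf(x)-f(x)|\leq \|f-c\|\left(e^{-nr(x,a)}+e^{-nr(x,b)}\right). \]
   Context: For a bounded function $f:[0,1]\to\mathbb{R}$, $\|f\|=\sup_{t\in[0,1]}|f(t)|$, and $\|f-c\|$ is the supremum norm of $t\mapsto f(t)-c$. The $n$th Bernstein polynomial of $f$ is $B_nf(x)=\sum_{j=0}^n f(j/n)\binom{n}{j}x^j(1-x)^{n-j}$, $x\in[0,1]$. For $x,\theta\in(0,1)$, $r(x,\theta)=\theta\log\frac{\theta}{x}+(1-\theta)\log\frac{1-\theta}{1-x}$ (the Kullback–Leibler divergence between Bernoulli distributions with success probabilities $\theta$ and $x$). *)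

theory Defs
  imports "HOL-Analysis.Analysis"
begin

definition bernstein_op :: "nat \<Rightarrow> (real \<Rightarrow> real) \<Rightarrow> real \<Rightarrow> real" where
  "bernstein_op n f x = (\<Sum>j\<le>n. f (real j / real n) * real (n choose j) * x ^ j * (1 - x) ^ (n - j))"

definition supnorm01 :: "(real \<Rightarrow> real) \<Rightarrow> real" where
  "supnorm01 f = (SUP t\<in>{0..1}. \<bar>f t\<bar>)"

definition kl_bern :: "real \<Rightarrow> real \<Rightarrow> real" where
  "kl_bern x \<theta> = \<theta> * ln (\<theta> / x) + (1 - \<theta>) * ln ((1 - \<theta>) / (1 - x))"

end

theory Submission
  imports Defs
begin

(* Away from (a,b) the function f - c is bounded by its sup norm, and inside (a,b) it vanishes,
   so |B_n f x - f x| is at most the sup norm times the binomial(n,x) mass of the two tails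
   {k <= n a} and {k >= n b}. Each tail is bounded by the Chernoff method: tilting the
   binomial weights by s^(k - n t) with s = t(1-x)/(x(1-t)) gives total mass exactly
   exp(-n r(x,t)), and on the tail beyond t the tilt factor is at least 1. *)

lemma bernstein_op_eq_sum_Bernstein:
  "bernstein_op n f x = (\<Sum>k\<le>n. f (real k / real n) * Bernstein n k x)"
  unfolding bernstein_op_def Bernstein_def by (simp add: mult_ac)

lemma bernstein_op_minus_const:
  "bernstein_op n f x - c = (\<Sum>k\<le>n. (f (real k / real n) - c) * Bernstein n k x)"
proof -
  have "c = (\<Sum>k\<le>n. c * Bernstein n k x)"
    by (simp flip: sum_distrib_left)
  then show ?thesis
    by (simp add: bernstein_op_eq_sum_Bernstein left_diff_distrib sum_subtractf)
qed

lemma abs_le_supnorm01: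
  assumes "bounded (g ` {0..1})" and "t \<in> {0..1}"
  shows "\<bar>g t\<bar> \<le> supnorm01 g"
proof -
  obtain B where "\<And>y. y \<in> g ` {0..1} \<Longrightarrow> norm y \<le> B"
    using assms(1) bounded_iff by metis
  then have "bdd_above ((\<lambda>t. \<bar>g t\<bar>) ` {0..1})"
    by (intro bdd_aboveI[where M = B]) auto
  then show ?thesis
    unfolding supnorm01_def by (rule cSUP_upper[OF assms(2)])
qed

lemma exp_neg_kl_bern:
  assumes x: "0 < x" "x < 1" and t: "0 < t" "t < 1"
  defines "s \<equiv> t * (1 - x) / (x * (1 - t))"
  shows "exp (- kl_bern x t) = s powr (- t) * (x * s + (1 - x))"
proof -
  have "s > 0" using x t by (simp add: s_def)
  have "x * s + (1 - x) = (1 - x) / (1 - t)"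
    using x t by (simp add: s_def field_simps)
  moreover have ln_s: "ln s = ln t + ln (1 - x) - ln x - ln (1 - t)"
    using x t by (simp add: s_def ln_div ln_mult)
  have "- kl_bern x t = - t * ln s + ln ((1 - x) / (1 - t))"
    unfolding kl_bern_def ln_s using x t by (simp add: ln_div algebra_simps)
  ultimately show ?thesis
    using x t \<open>s > 0\<close> by (simp add: exp_diff exp_minus powr_def divide_inverse)
qed

lemma sum_Bernstein_tilted:
  assumes x: "0 < x" "x < 1" and t: "0 < t" "t < 1"
  defines "s \<equiv> t * (1 - x) / (x * (1 - t))"
  shows "(\<Sum>k\<le>n. Bernstein n k x * s powr (real k - real n * t)) = exp (- real n * kl_bern x t)"
proof -
  have "s > 0" using x t by (simp add: s_def)
  have "(\<Sum>k\<le>n. Bernstein n k x * s powr (real k - real n * t))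
      = s powr (- real n * t) * (\<Sum>k\<le>n. real (n choose k) * (x * s) ^ k * (1 - x) ^ (n - k))"
    unfolding sum_distrib_left
  proof (rule sum.cong)
    fix k
    have "s powr (real k - real n * t) = s powr (- real n * t) * s ^ k"
      using \<open>s > 0\<close> by (simp add: powr_diff powr_realpow[symmetric] powr_minus divide_inverse)
    then show "Bernstein n k x * s powr (real k - real n * t)
        = s powr (- real n * t) * (real (n choose k) * (x * s) ^ k * (1 - x) ^ (n - k))"
      by (simp add: Bernstein_def power_mult_distrib)
  qed simp
  also have "\<dots> = s powr (- real n * t) * (x * s + (1 - x)) ^ n"
    by (simp add: binomial_ring mult_ac)
  also have "\<dots> = (s powr (- t) * (x * s + (1 - x))) ^ n"
    using \<open>s > 0\<close> by (simp add: power_mult_distrib powr_realpow[symmetric] powr_powr mult_ac)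
  also have "\<dots> = exp (- kl_bern x t) ^ n"
    using exp_neg_kl_bern[OF x t, folded s_def] by simp
  also have "\<dots> = exp (- real n * kl_bern x t)"
    by (simp flip: exp_of_nat_mult)
  finally show ?thesis .
qed

lemma sum_Bernstein_le_exp_kl_bern:
  assumes x: "0 < x" "x < 1" and t: "0 < t" "t < 1" and S: "S \<subseteq> {..n}"
    and tilt_ge_1: "\<And>k. k \<in> S \<Longrightarrow> 1 \<le> (t * (1 - x) / (x * (1 - t))) powr (real k - real n * t)"
  shows "(\<Sum>k\<in>S. Bernstein n k x) \<le> exp (- real n * kl_bern x t)"
proof -
  define s where "s = t * (1 - x) / (x * (1 - t))"
  have "(\<Sum>k\<in>S. Bernstein n k x) \<le> (\<Sum>k\<in>S. Bernstein n k x * s powr (real k - real n * t))"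
  proof (rule sum_mono)
    fix k assume "k \<in> S"
    show "Bernstein n k x \<le> Bernstein n k x * s powr (real k - real n * t)"
      using mult_left_mono[OF tilt_ge_1[OF \<open>k \<in> S\<close>], of "Bernstein n k x"] x
      by (simp add: s_def Bernstein_nonneg)
  qed
  also have "\<dots> \<le> (\<Sum>k\<le>n. Bernstein n k x * s powr (real k - real n * t))"
    using S x by (intro sum_mono2) (auto simp: Bernstein_nonneg)
  also have "\<dots> = exp (- real n * kl_bern x t)"
    using sum_Bernstein_tilted[OF x t] by (simp add: s_def)
  finally show ?thesis .
qed

lemma sum_Bernstein_lower_tail:
  assumes "0 < t" "t \<le> x" "x < 1"
  shows "(\<Sum>k | k \<le> n \<and> real k \<le> real n * t. Bernstein n k x) \<le> exp (- real n * kl_bern x t)"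
proof (rule sum_Bernstein_le_exp_kl_bern)
  fix k assume "k \<in> {k. k \<le> n \<and> real k \<le> real n * t}"
  moreover have "0 < t * (1 - x) / (x * (1 - t))" "t * (1 - x) / (x * (1 - t)) \<le> 1"
    using assms by (auto simp: field_simps mult_mono)
  ultimately show "1 \<le> (t * (1 - x) / (x * (1 - t))) powr (real k - real n * t)"
    using powr_mono2'[of "real k - real n * t" "t * (1 - x) / (x * (1 - t))" 1] by simp
qed (use assms in auto)

lemma sum_Bernstein_upper_tail:
  assumes "0 < x" "x \<le> t" "t < 1"
  shows "(\<Sum>k | k \<le> n \<and> real n * t \<le> real k. Bernstein n k x) \<le> exp (- real n * kl_bern x t)"
proof (rule sum_Bernstein_le_exp_kl_bern)
  fix k assume "k \<in> {k. k \<le> n \<and> real n * t \<le> real k}"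
  moreover have "1 \<le> t * (1 - x) / (x * (1 - t))"
    using assms by (auto simp: field_simps mult_mono)
  ultimately show "1 \<le> (t * (1 - x) / (x * (1 - t))) powr (real k - real n * t)"
    by (simp add: ge_one_powr_ge_zero)
qed (use assms in auto)

lemma bernstein_op_dist_const_le_tails:
  assumes "0 \<le> a" "0 \<le> x" "x \<le> 1"
    and bound: "\<And>t. t \<in> {0..1} \<Longrightarrow> \<bar>f t - c\<bar> \<le> M"
    and const: "\<And>t. t \<in> {a<..<b} \<Longrightarrow> f t = c"
  shows "\<bar>bernstein_op n f x - c\<bar> \<le> M * ((\<Sum>k | k \<le> n \<and> real k \<le> real n * a. Bernstein n k x)
                                     + (\<Sum>k | k \<le> n \<and> real n * b \<le> real k. Bernstein n k x))"
proof -
  define L where "L = {k. k \<le> n \<and> real k \<le> real n * a}"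
  define H where "H = {k. k \<le> n \<and> real n * b \<le> real k}"
  define g where "g k = \<bar>f (real k / real n) - c\<bar> * Bernstein n k x" for k
  have g_nonneg: "0 \<le> g k" for k
    using assms by (simp add: g_def Bernstein_nonneg)
  have g_le: "g k \<le> M * Bernstein n k x" if "k \<le> n" for k
  proof -
    have "real k / real n \<in> {0..1}"
      using that by (auto simp: divide_le_eq_1)
    then show ?thesis
      using assms by (simp add: g_def bound Bernstein_nonneg mult_right_mono)
  qed
  have g_zero: "g k = 0" if "k \<in> {..n} - (L \<union> H)" for k
  proof -
    from that have "real n * a < real k" "real k < real n * b" "k \<le> n"
      by (auto simp: L_def H_def)
    moreover from this \<open>0 \<le> a\<close> have "0 < real n"
      by (smt (verit) of_nat_mono mult_nonneg_nonneg of_nat_0_le_iff)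
    ultimately have "real k / real n \<in> {a<..<b}"
      by (auto simp: pos_less_divide_eq pos_divide_less_eq mult.commute)
    then show ?thesis by (simp add: g_def const)
  qed
  have "\<bar>bernstein_op n f x - c\<bar> \<le> (\<Sum>k\<le>n. g k)"
    unfolding bernstein_op_minus_const g_def
    using assms by (intro order_trans[OF sum_abs]) (simp add: abs_mult Bernstein_nonneg)
  also have "\<dots> = sum g (L \<union> H)"
    using g_zero by (intro sum.mono_neutral_right) (auto simp: L_def H_def)
  also have "\<dots> \<le> sum g L + sum g H"
    using sum.union_inter[of L H g] sum_nonneg[of "L \<inter> H" g] g_nonneg
    by (simp add: L_def H_def)
  also have "\<dots> \<le> M * (\<Sum>k\<in>L. Bernstein n k x) + M * (\<Sum>k\<in>H. Bernstein n k x)"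
    using g_le unfolding sum_distrib_left
    by (intro add_mono sum_mono) (auto simp: L_def H_def)
  finally show ?thesis
    by (simp add: L_def H_def distrib_left)
qed

theorem theorem1:
  fixes f :: "real \<Rightarrow> real" and a b c :: real
  assumes bdd: "bounded (f ` {0..1})"
    and ab: "0 < a" "a < b" "b < 1"
    and const: "\<And>t. t \<in> {a<..<b} \<Longrightarrow> f t = c"
  shows "\<forall>n::nat. \<forall>x\<in>{a<..<b}.
    \<bar>bernstein_op n f x - f x\<bar>
      \<le> supnorm01 (\<lambda>t. f t - c) * (exp (- real n * kl_bern x a) + exp (- real n * kl_bern x b))"
proof (intro allI ballI)
  fix n :: nat and x assume x: "x \<in> {a<..<b}"
  define M where "M = supnorm01 (\<lambda>t. f t - c)"
  have "bounded ((\<lambda>t. f t - c) ` {0..1})"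
    using bounded_translation_minus[OF bdd, of c] by (simp add: image_image)
  then have bound: "\<bar>f t - c\<bar> \<le> M" if "t \<in> {0..1}" for t
    unfolding M_def using abs_le_supnorm01 that by blast
  then have "0 \<le> M" by force
  have "\<bar>bernstein_op n f x - f x\<bar> = \<bar>bernstein_op n f x - c\<bar>"
    using const x by simp
  also have "\<dots> \<le> M * ((\<Sum>k | k \<le> n \<and> real k \<le> real n * a. Bernstein n k x)
                        + (\<Sum>k | k \<le> n \<and> real n * b \<le> real k. Bernstein n k x))"
    using x ab by (intro bernstein_op_dist_const_le_tails bound const) auto
  also have "\<dots> \<le> M * (exp (- real n * kl_bern x a) + exp (- real n * kl_bern x b))"
    using x ab \<open>0 \<le> M\<close>
    by (intro mult_left_mono add_mono sum_Bernstein_lower_tail sum_Bernstein_upper_tail) auto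
  finally show "\<bar>bernstein_op n f x - f x\<bar>
      \<le> M * (exp (- real n * kl_bern x a) + exp (- real n * kl_bern x b))" .
qed

end
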